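(* Let $\{\triangleright\}\subseteq\sigma\subseteq\{\triangleright,\wedge,\mathrm{upd},\sqcup\}$ and let $\mathcal{A}$ be a $\sigma$-algebra that is representable by partial functions and whose atoms are separating. Then $\mathcal{A}$ is the $\sigma$-reduct of a $(\sigma\cup\{;\})$-algebra that is representable by partial functions, whose atoms are separating, and in which composition is completely left-distributive over meets.
   Context: The operations are interpreted on partial functions as: $f \triangleright g = \{(x,y) \in g : x \notin \mathrm{dom}(f)\}$; $f;g=\{(x,z):\exists y\,((x,y)\in f,(y,z)\in g)\}$; $f\wedge g = f\cap g$; $\mathrm{upd}(f,g)(x)$ is $f(x)$ if $f(x)$ defined and $g(x)$ undefined, $g(x)$ if both defined, undefined otherwise; $(f\sqcup g)(x)$ is $f(x)$ if defined, else $g(x)$. An algebra is representable by partial functions if it is isomorphic to an algebra of partial functions (on some base set) with these operations. Define $0 := a\triangleright a$, $a\lhd b := (a\triangleright b)\triangleright b$, $a \le b :\iff a\lhd b = a$. An atom is a minimal nonzero element; atoms are separating if whenever $a\not\le b$ there is an atom $c\le a$ with $c\not\le b$. Composition is completely left-distributive over meets if for every nonempty $S$ with $\bigwedge S$ existing and every $a$, $\bigwedge\{a;s:s\in S\}$ exists and equals $a;\bigwedge S$. *)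

theory Defs
  imports Main
begin

datatype opsym = Pref | Comp | Meet | Upd | Join

text \<open>An algebra: a carrier together with an interpretation of every binary
  operation symbol; only the symbols in the signature under consideration matter.\<close>
record 'a alg =
  carrier :: "'a set"
  op :: "opsym \<Rightarrow> 'a \<Rightarrow> 'a \<Rightarrow> 'a"

definition sig_algebra :: "opsym set \<Rightarrow> 'a alg \<Rightarrow> bool" where
  "sig_algebra \<sigma> A \<longleftrightarrow>
     (\<forall>s\<in>\<sigma>. \<forall>a\<in>carrier A. \<forall>b\<in>carrier A. op A s a b \<in> carrier A)"

definition pf_pref :: "('x \<rightharpoonup> 'x) \<Rightarrow> ('x \<rightharpoonup> 'x) \<Rightarrow> ('x \<rightharpoonup> 'x)" where
  "pf_pref f g = (\<lambda>x. if f x = None then g x else None)"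

definition pf_comp :: "('x \<rightharpoonup> 'x) \<Rightarrow> ('x \<rightharpoonup> 'x) \<Rightarrow> ('x \<rightharpoonup> 'x)" where
  "pf_comp f g = (\<lambda>x. case f x of None \<Rightarrow> None | Some y \<Rightarrow> g y)"

definition pf_meet :: "('x \<rightharpoonup> 'x) \<Rightarrow> ('x \<rightharpoonup> 'x) \<Rightarrow> ('x \<rightharpoonup> 'x)" where
  "pf_meet f g = (\<lambda>x. if f x = g x then f x else None)"

definition pf_upd :: "('x \<rightharpoonup> 'x) \<Rightarrow> ('x \<rightharpoonup> 'x) \<Rightarrow> ('x \<rightharpoonup> 'x)" where
  "pf_upd f g = (\<lambda>x. if f x = None then None else if g x = None then f x else g x)"

definition pf_join :: "('x \<rightharpoonup> 'x) \<Rightarrow> ('x \<rightharpoonup> 'x) \<Rightarrow> ('x \<rightharpoonup> 'x)" where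
  "pf_join f g = (\<lambda>x. case f x of Some y \<Rightarrow> Some y | None \<Rightarrow> g x)"

fun pf_op :: "opsym \<Rightarrow> ('x \<rightharpoonup> 'x) \<Rightarrow> ('x \<rightharpoonup> 'x) \<Rightarrow> ('x \<rightharpoonup> 'x)" where
  "pf_op Pref = pf_pref"
| "pf_op Comp = pf_comp"
| "pf_op Meet = pf_meet"
| "pf_op Upd = pf_upd"
| "pf_op Join = pf_join"

definition representation_over ::
    "opsym set \<Rightarrow> 'a alg \<Rightarrow> 'x set \<Rightarrow> ('a \<Rightarrow> ('x \<rightharpoonup> 'x)) \<Rightarrow> bool" where
  "representation_over \<sigma> A X h \<longleftrightarrow>
     inj_on h (carrier A) \<and>
     (\<forall>a\<in>carrier A. dom (h a) \<subseteq> X \<and> ran (h a) \<subseteq> X) \<and>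
     (\<forall>s\<in>\<sigma>. \<forall>a\<in>carrier A. \<forall>b\<in>carrier A. h (op A s a b) = pf_op s (h a) (h b))"

definition representable_on_type :: "'x itself \<Rightarrow> opsym set \<Rightarrow> 'a alg \<Rightarrow> bool" where
  "representable_on_type T \<sigma> A \<longleftrightarrow>
     sig_algebra \<sigma> A \<and> (\<exists>(X::'x set) h. representation_over \<sigma> A X h)"

definition pref :: "'a alg \<Rightarrow> 'a \<Rightarrow> 'a \<Rightarrow> 'a" where
  "pref A a b = op A Pref a b"

definition zero :: "'a alg \<Rightarrow> 'a" where
  "zero A = (let a = (SOME a. a \<in> carrier A) in pref A a a)"

definition tri :: "'a alg \<Rightarrow> 'a \<Rightarrow> 'a \<Rightarrow> 'a" where
  "tri A a b = pref A (pref A a b) b"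

definition leq :: "'a alg \<Rightarrow> 'a \<Rightarrow> 'a \<Rightarrow> bool" where
  "leq A a b \<longleftrightarrow> tri A a b = a"

definition atom :: "'a alg \<Rightarrow> 'a \<Rightarrow> bool" where
  "atom A c \<longleftrightarrow> c \<in> carrier A \<and> c \<noteq> zero A \<and>
     (\<forall>d\<in>carrier A. leq A d c \<longrightarrow> d = zero A \<or> d = c)"

definition atoms_separating :: "'a alg \<Rightarrow> bool" where
  "atoms_separating A \<longleftrightarrow>
     (\<forall>a\<in>carrier A. \<forall>b\<in>carrier A. \<not> leq A a b \<longrightarrow>
        (\<exists>c. atom A c \<and> leq A c a \<and> \<not> leq A c b))"

definition is_inf :: "'a alg \<Rightarrow> 'a set \<Rightarrow> 'a \<Rightarrow> bool" where
  "is_inf A S m \<longleftrightarrow> m \<in> carrier A \<and> (\<forall>s\<in>S. leq A m s) \<and>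
     (\<forall>m'\<in>carrier A. (\<forall>s\<in>S. leq A m' s) \<longrightarrow> leq A m' m)"

definition comp_completely_left_distributive :: "'a alg \<Rightarrow> bool" where
  "comp_completely_left_distributive A \<longleftrightarrow>
     (\<forall>S m a. S \<noteq> {} \<and> S \<subseteq> carrier A \<and> is_inf A S m \<and> a \<in> carrier A \<longrightarrow>
        is_inf A ((\<lambda>s. op A Comp a s) ` S) (op A Comp a m))"

definition is_reduct :: "opsym set \<Rightarrow> 'a alg \<Rightarrow> 'a alg \<Rightarrow> bool" where
  "is_reduct \<sigma> A B \<longleftrightarrow> carrier A = carrier B \<and>
     (\<forall>s\<in>\<sigma>. \<forall>a\<in>carrier A. \<forall>b\<in>carrier A. op A s a b = op B s a b)"

end

theory Submission
  imports Defs
begin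

text \<open>Composition can always be added, interpreted as the constant 0. To represent it,
  move every partial function f on the base set to the function sending (x, 0) to (f x, 1):
  the operations other than composition act pointwise and so commute with this shift, while
  the composite of two shifted functions is empty because ranges live at level 1 and domains
  at level 0. The order of the algebra is defined from \<open>\<triangleright>\<close> alone, so atoms and
  separation are unaffected, and complete left-distributivity holds trivially since every
  composite is 0.\<close>

lemma pf_op_map_option:
  assumes "inj g" "s \<noteq> Comp"
    and "f1 p = map_option g (F1 x)" "f2 p = map_option g (F2 x)"
  shows "pf_op s f1 f2 p = map_option g (pf_op s F1 F2 x)"
proof -
  have "map_option g u = map_option g v \<longleftrightarrow> u = v" for u v
    using \<open>inj g\<close> by (cases u; cases v) (auto dest: injD)
  with assms(2-4) show ?thesis
    by (cases s) (auto simp: pf_pref_def pf_meet_def pf_upd_def pf_join_def split: option.splits)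
qed

lemma pf_op_None:
  assumes "s \<noteq> Comp" "f1 p = None" "f2 p = None"
  shows "pf_op s f1 f2 p = None"
  using assms by (cases s) (auto simp: pf_pref_def pf_meet_def pf_upd_def pf_join_def)

lemma pf_pref_pf_pref: "pf_pref (pf_pref f g) g = g |` dom f"
  by (auto simp: pf_pref_def restrict_map_def fun_eq_iff)

lemma restrict_map_dom_eq_iff_map_le: "g |` dom f = f \<longleftrightarrow> f \<subseteq>\<^sub>m g"
  unfolding map_le_def restrict_map_def fun_eq_iff by (metis domIff)

definition shift_map :: "('b \<rightharpoonup> 'b) \<Rightarrow> ('c + 'b) \<times> nat \<rightharpoonup> ('c + 'b) \<times> nat" where
  "shift_map f p = (case p of (Inr x, 0) \<Rightarrow> map_option (\<lambda>y. (Inr y, 1)) (f x) | _ \<Rightarrow> None)"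

lemma inj_shift_map: "inj (shift_map :: ('b \<rightharpoonup> 'b) \<Rightarrow> ('c + 'b) \<times> nat \<rightharpoonup> _)"
proof (rule injI)
  fix f g :: "'b \<rightharpoonup> 'b"
  assume eq: "(shift_map f :: ('c + 'b) \<times> nat \<rightharpoonup> _) = shift_map g"
  show "f = g"
  proof
    fix x
    have "map_option (\<lambda>y. (Inr y :: 'c + 'b, 1::nat)) (f x) = map_option (\<lambda>y. (Inr y, 1)) (g x)"
      using fun_cong[OF eq, of "(Inr x, 0)"] by (simp add: shift_map_def)
    then show "f x = g x"
      by (cases "f x"; cases "g x") auto
  qed
qed

lemma shift_map_empty: "shift_map Map.empty = Map.empty"
  by (auto simp: shift_map_def fun_eq_iff split: prod.split sum.split nat.split)

lemma shift_map_pf_op: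
  assumes "s \<noteq> Comp"
  shows "shift_map (pf_op s f g) = pf_op s (shift_map f) (shift_map g)"
proof
  fix p :: "('c + 'b) \<times> nat"
  show "shift_map (pf_op s f g) p = pf_op s (shift_map f) (shift_map g) p"
  proof (cases "\<exists>x. p = (Inr x, 0)")
    case True
    then obtain x where p: "p = (Inr x, 0)" by blast
    have "inj (\<lambda>y. (Inr y :: 'c + 'b, 1 :: nat))"
      by (auto intro: injI)
    from pf_op_map_option[OF this assms, of "shift_map f" p f x "shift_map g" g] p show ?thesis
      by (simp add: shift_map_def)
  next
    case False
    then have "shift_map h p = None" for h :: "'b \<rightharpoonup> 'b"
      by (auto simp: shift_map_def split: prod.split sum.split nat.split)
    then show ?thesis
      by (simp add: pf_op_None[OF assms])
  qed
qed

lemma pf_comp_shift_map: "pf_comp (shift_map f) (shift_map g) = Map.empty"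
  by (auto simp: pf_comp_def shift_map_def fun_eq_iff split: prod.split sum.split nat.split option.split)

definition zero_comp :: "'a alg \<Rightarrow> 'a alg" where
  "zero_comp A = A\<lparr>op := (op A)(Comp := (\<lambda>_ _. zero A))\<rparr>"

lemma carrier_zero_comp [simp]: "carrier (zero_comp A) = carrier A"
  by (simp add: zero_comp_def)

lemma op_zero_comp [simp]: "op (zero_comp A) s = (if s = Comp then (\<lambda>_ _. zero A) else op A s)"
  by (simp add: zero_comp_def)

lemma pref_zero_comp [simp]: "pref (zero_comp A) = pref A"
  by (simp add: pref_def fun_eq_iff)

lemma zero_zero_comp [simp]: "zero (zero_comp A) = zero A"
  by (simp add: zero_def)

lemma leq_zero_comp [simp]: "leq (zero_comp A) = leq A"
  by (simp add: leq_def tri_def fun_eq_iff)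

lemma atom_zero_comp [simp]: "atom (zero_comp A) = atom A"
  by (simp add: atom_def fun_eq_iff)

lemma atoms_separating_zero_comp: "atoms_separating (zero_comp A) = atoms_separating A"
  by (simp add: atoms_separating_def)

lemma is_reduct_zero_comp: "Comp \<notin> \<sigma> \<Longrightarrow> is_reduct \<sigma> A (zero_comp A)"
  by (auto simp: is_reduct_def)

context
  fixes \<sigma> :: "opsym set" and A :: "'a alg" and X :: "'b set" and h :: "'a \<Rightarrow> ('b \<rightharpoonup> 'b)"
  assumes sig: "sig_algebra \<sigma> A" and Pref: "Pref \<in> \<sigma>" and rep: "representation_over \<sigma> A X h"
begin

lemma pref_closed: "a \<in> carrier A \<Longrightarrow> b \<in> carrier A \<Longrightarrow> pref A a b \<in> carrier A"
  using sig Pref by (auto simp: sig_algebra_def pref_def)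

lemma rep_pref: "a \<in> carrier A \<Longrightarrow> b \<in> carrier A \<Longrightarrow> h (pref A a b) = pf_pref (h a) (h b)"
  using rep Pref by (auto simp: representation_over_def pref_def)

lemma leq_iff_map_le:
  assumes "a \<in> carrier A" "b \<in> carrier A"
  shows "leq A a b \<longleftrightarrow> h a \<subseteq>\<^sub>m h b"
proof -
  have "tri A a b \<in> carrier A"
    using assms by (simp add: tri_def pref_closed)
  then have "leq A a b \<longleftrightarrow> h (tri A a b) = h a"
    using rep assms by (auto simp: leq_def representation_over_def dest: inj_onD)
  also have "h (tri A a b) = h b |` dom (h a)"
    using assms by (simp add: tri_def rep_pref pref_closed pf_pref_pf_pref)
  finally show ?thesis
    by (simp add: restrict_map_dom_eq_iff_map_le)
qed

lemma zero_eq_pref_self: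
  assumes "carrier A \<noteq> {}"
  obtains a where "a \<in> carrier A" "zero A = pref A a a"
  using assms someI[of "\<lambda>a. a \<in> carrier A"] by (auto simp: zero_def Let_def)

lemma zero_in_carrier: "carrier A \<noteq> {} \<Longrightarrow> zero A \<in> carrier A"
  by (metis zero_eq_pref_self pref_closed)

lemma rep_zero: "carrier A \<noteq> {} \<Longrightarrow> h (zero A) = Map.empty"
  by (metis zero_eq_pref_self rep_pref pf_pref_def)

context
  assumes Comp: "Comp \<notin> \<sigma>"
begin

lemma sig_algebra_zero_comp: "sig_algebra (\<sigma> \<union> {Comp}) (zero_comp A)"
  using sig Comp zero_in_carrier by (auto simp: sig_algebra_def)

lemma representation_zero_comp:
  "representation_over (\<sigma> \<union> {Comp}) (zero_comp A) UNIV (shift_map \<circ> h)"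
  unfolding representation_over_def
proof (intro conjI ballI)
  show "inj_on (shift_map \<circ> h) (carrier (zero_comp A))"
    using rep inj_shift_map by (auto simp: representation_over_def intro: comp_inj_on inj_on_subset)
next
  fix s a b
  assume s: "s \<in> \<sigma> \<union> {Comp}" and ab: "a \<in> carrier (zero_comp A)" "b \<in> carrier (zero_comp A)"
  show "(shift_map \<circ> h) (op (zero_comp A) s a b) = pf_op s ((shift_map \<circ> h) a) ((shift_map \<circ> h) b)"
  proof (cases "s = Comp")
    case True
    from ab have "carrier A \<noteq> {}" by auto
    with True show ?thesis
      by (simp add: rep_zero shift_map_empty pf_comp_shift_map)
  next
    case False
    with s ab rep show ?thesis
      by (simp add: representation_over_def shift_map_pf_op)
  qed
qed auto

lemma comp_completely_left_distributive_zero_comp: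
  "comp_completely_left_distributive (zero_comp A)"
proof (unfold comp_completely_left_distributive_def, intro allI impI)
  fix S m a
  assume "S \<noteq> {} \<and> S \<subseteq> carrier (zero_comp A) \<and> is_inf (zero_comp A) S m \<and> a \<in> carrier (zero_comp A)"
  then have "S \<noteq> {}" "carrier A \<noteq> {}" and image: "(\<lambda>s. op (zero_comp A) Comp a s) ` S = {zero A}"
    by auto
  have "leq A (zero A) (zero A)"
    using \<open>carrier A \<noteq> {}\<close> by (simp add: leq_iff_map_le zero_in_carrier rep_zero)
  then show "is_inf (zero_comp A) ((\<lambda>s. op (zero_comp A) Comp a s) ` S) (op (zero_comp A) Comp a m)"
    using \<open>S \<noteq> {}\<close> \<open>carrier A \<noteq> {}\<close> by (auto simp: image is_inf_def zero_in_carrier rep_zero)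
qed

end

end

theorem lemma6p2:
  fixes \<sigma> :: "opsym set" and A :: "'a alg"
  assumes "Pref \<in> \<sigma>" and "\<sigma> \<subseteq> {Pref, Meet, Upd, Join}"
    and "representable_on_type TYPE('b) \<sigma> A"
    and "atoms_separating A"
  shows "\<exists>B :: 'a alg. is_reduct \<sigma> A B \<and>
           representable_on_type TYPE(('a + 'b) \<times> nat) (\<sigma> \<union> {Comp}) B \<and>
           atoms_separating B \<and> comp_completely_left_distributive B"
proof -
  obtain X :: "'b set" and h where sig: "sig_algebra \<sigma> A" and rep: "representation_over \<sigma> A X h"
    using assms(3) unfolding representable_on_type_def by blast
  have Comp: "Comp \<notin> \<sigma>"
    using assms(2) by auto
  have "representable_on_type TYPE(('a + 'b) \<times> nat) (\<sigma> \<union> {Comp}) (zero_comp A)"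
    unfolding representable_on_type_def
    using sig_algebra_zero_comp[OF sig assms(1) rep Comp]
      representation_zero_comp[OF sig assms(1) rep Comp] by blast
  with is_reduct_zero_comp[OF Comp] atoms_separating_zero_comp assms(4)
    comp_completely_left_distributive_zero_comp[OF sig assms(1) rep Comp]
  show ?thesis by blast
qed

end
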